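(* Let $G$ be the cube graph $Q_3$, let $P$ be a pot realizing $G$ according to Scenario 3, and let $\lambda$ be an assembly design of $G$ with $P_\lambda(G)\subseteq P$. If $t\in P$ and $\lambda(v_i)=\lambda(v_j)=t$ for two distinct vertices $v_i\neq v_j$, then $t=\{a,b,c\}$ where the three cohesive-end types $a,b,c$ belong to three pairwise distinct bond-edge types.
   Context: Fix a set $\Sigma$ of symbols (bond-edge types) and a disjoint copy $\hat\Sigma=\{\hat a:a\in\Sigma\}$ with $\hat{\hat a}=a$; elements of $\Sigma\cup\hat\Sigma$ are cohesive-end types, and $x$ and $\hat x$ belong to the same bond-edge type. A tile is a finite multiset of cohesive-end types. A pot is a finite set $P$ of tiles such that whenever $x$ occurs in a tile of $P$, $\hat x$ occurs in some tile of $P$. Graphs are finite, loops and multiple edges allowed. An assembly design of a graph $H$ is a labeling $\lambda$ of the half-edges of $H$ by cohesive-end types such that the two half-edges of each edge receive complementary labels $x,\hat x$; $\lambda(v)=t_v$ denotes the multiset of labels of half-edges at vertex $v$, and $P_\lambda(H)=\{t_v: v\in V(H)\}$. $P$ realizes $H$ ($H\in\mathcal{O}(P)$) if some assembly design $\lambda$ has $P_\lambda(H)\subseteq P$. $P$ realizes $G$ according to Scenario 3 if $G\in\mathcal{O}(P)$, every $H\in\mathcal{O}(P)$ has $\#V(H)\ge\#V(G)$, and every $H\in\mathcal{O}(P)$ with $\#V(H)=\#V(G)$ is isomorphic to $G$. *)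

theory Defs
  imports Main "HOL-Library.Multiset"
begin

text \<open>A cohesive-end type over the symbol set (type 'a) is a pair (a, h):
  (a, False) stands for a, (a, True) for hat a. The bond-edge type is fst.\<close>

type_synonym 'a cend = "'a \<times> bool"
type_synonym 'a tile = "'a cend multiset"

definition hat :: "'a cend \<Rightarrow> 'a cend" where
  "hat x = (fst x, \<not> snd x)"

definition bond_type :: "'a cend \<Rightarrow> 'a" where
  "bond_type x = fst x"

definition is_pot :: "'a tile set \<Rightarrow> bool" where
  "is_pot P \<longleftrightarrow> finite P \<and>
     (\<forall>t\<in>P. \<forall>x. x \<in># t \<longrightarrow> (\<exists>s\<in>P. hat x \<in># s))"

text \<open>Edge e has two half-edges (e,False) and (e,True), attached to the
  vertices fst (ends e) and snd (ends e) respectively.\<close>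

record ('v, 'e) mgraph =
  verts :: "'v set"
  edges :: "'e set"
  ends :: "'e \<Rightarrow> 'v \<times> 'v"

definition half_end :: "('v, 'e) mgraph \<Rightarrow> 'e \<times> bool \<Rightarrow> 'v" where
  "half_end H h = (if snd h then snd (ends H (fst h)) else fst (ends H (fst h)))"

definition is_graph :: "('v, 'e) mgraph \<Rightarrow> bool" where
  "is_graph H \<longleftrightarrow> finite (verts H) \<and> finite (edges H) \<and> verts H \<noteq> {} \<and>
     (\<forall>e\<in>edges H. fst (ends H e) \<in> verts H \<and> snd (ends H e) \<in> verts H)"

definition half_edges_at :: "('v, 'e) mgraph \<Rightarrow> 'v \<Rightarrow> ('e \<times> bool) set" where
  "half_edges_at H v = {h. fst h \<in> edges H \<and> half_end H h = v}"

definition assembly_design :: "('v, 'e) mgraph \<Rightarrow> ('e \<times> bool \<Rightarrow> 'a cend) \<Rightarrow> bool" where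
  "assembly_design H lam \<longleftrightarrow> (\<forall>e\<in>edges H. lam (e, True) = hat (lam (e, False)))"

definition tile_at :: "('v, 'e) mgraph \<Rightarrow> ('e \<times> bool \<Rightarrow> 'a cend) \<Rightarrow> 'v \<Rightarrow> 'a tile" where
  "tile_at H lam v = image_mset lam (mset_set (half_edges_at H v))"

definition pot_of :: "('v, 'e) mgraph \<Rightarrow> ('e \<times> bool \<Rightarrow> 'a cend) \<Rightarrow> 'a tile set" where
  "pot_of H lam = tile_at H lam ` verts H"

definition realizes :: "'a tile set \<Rightarrow> ('v, 'e) mgraph \<Rightarrow> bool" where
  "realizes P H \<longleftrightarrow> (\<exists>lam. assembly_design H lam \<and> pot_of H lam \<subseteq> P)"

definition mgraph_iso :: "('v, 'e) mgraph \<Rightarrow> ('w, 'f) mgraph \<Rightarrow> bool" where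
  "mgraph_iso H K \<longleftrightarrow> (\<exists>f g. bij_betw f (verts H) (verts K) \<and> bij_betw g (edges H) (edges K) \<and>
     (\<forall>e\<in>edges H. ends K (g e) = (f (fst (ends H e)), f (snd (ends H e))) \<or>
                  ends K (g e) = (f (snd (ends H e)), f (fst (ends H e)))))"

text \<open>Scenario 3. Every finite graph is isomorphic to one on nat vertices and
  nat edge labels, so H ranges over such graphs.\<close>
definition realizes_scenario3 :: "'a tile set \<Rightarrow> ('v, 'e) mgraph \<Rightarrow> bool" where
  "realizes_scenario3 P G \<longleftrightarrow> realizes P G \<and>
     (\<forall>H :: (nat, nat) mgraph. is_graph H \<and> realizes P H \<longrightarrow>
         card (verts H) \<ge> card (verts G) \<and>
         (card (verts H) = card (verts G) \<longrightarrow> mgraph_iso H G))"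

text \<open>Vertices 0..7 (binary words of length 3); edge (v,i) for bit i of v
  equal to 0 joins v and v + 2^i.\<close>
definition Q3 :: "(nat, nat \<times> nat) mgraph" where
  "Q3 = \<lparr> verts = {0..<8},
          edges = {(v, i). v < 8 \<and> i < 3 \<and> \<not> bit v i},
          ends = (\<lambda>(v, i). (v, v + 2 ^ i)) \<rparr>"

end

(* If two half-edges a, b carry the same cohesive end, then reattaching a where b was and
   b where a was turns an assembly design of a graph into one of a graph with the same
   vertices, edges and tiles.  Under Scenario 3 every such swap of Q3 is again isomorphic to Q3,
   hence bipartite and without parallel edges.  Swapping an end x with the partner of an end
   hat x at the same vertex would create a loop, so no tile holds complementary ends; in
   particular vertices with equal tiles are not adjacent, and two ends of one bond-edge type at
   a vertex are equal.  If the tile of vi contained x twice, so would the tile of vj, and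
   since every vertex of Q3 except the antipode of vi is within distance two of vi, some
   x-half-edge at vj has its far end w adjacent to vi or sharing a neighbour m with vi; swapping
   it with a suitable x-half-edge at vi creates a parallel edge vi-w or a triangle vi-m-w. *)

theory Submission
  imports Defs "HOL-Library.Countable" "HOL-Combinatorics.Permutations"
begin

definition other_half :: "'e \<times> bool \<Rightarrow> 'e \<times> bool" where
  "other_half h = (fst h, \<not> snd h)"

definition half_edges :: "('v, 'e) mgraph \<Rightarrow> ('e \<times> bool) set" where
  "half_edges H = {h. fst h \<in> edges H}"

definition adjacent :: "('v, 'e) mgraph \<Rightarrow> 'v \<Rightarrow> 'v \<Rightarrow> bool" where
  "adjacent H x y \<longleftrightarrow>
     (\<exists>h \<in> half_edges H. half_end H h = x \<and> half_end H (other_half h) = y)"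

definition bipartite :: "('v, 'e) mgraph \<Rightarrow> bool" where
  "bipartite H \<longleftrightarrow> (\<exists>c :: 'v \<Rightarrow> bool.
     \<forall>h \<in> half_edges H. c (half_end H h) \<noteq> c (half_end H (other_half h)))"

definition no_parallel_edges :: "('v, 'e) mgraph \<Rightarrow> bool" where
  "no_parallel_edges H \<longleftrightarrow> (\<forall>h \<in> half_edges H. \<forall>h' \<in> half_edges H.
     half_end H h = half_end H h' \<longrightarrow>
     half_end H (other_half h) = half_end H (other_half h') \<longrightarrow> fst h = fst h')"

lemma no_parallel_edgesD:
  assumes "no_parallel_edges H" "h \<in> half_edges H" "h' \<in> half_edges H"
    and "half_end H h = half_end H h'" "half_end H (other_half h) = half_end H (other_half h')"
  shows "fst h = fst h'"
  using assms unfolding no_parallel_edges_def by blast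

lemma other_half_other_half [simp]: "other_half (other_half h) = h"
  by (simp add: other_half_def)

lemma other_half_Pair [simp]: "other_half (e, s) = (e, \<not> s)"
  by (simp add: other_half_def)

lemma other_half_neq [simp]: "other_half h \<noteq> h" "h \<noteq> other_half h"
  by (cases h; simp add: other_half_def)+

lemma other_half_in_half_edges [simp]: "other_half h \<in> half_edges H \<longleftrightarrow> h \<in> half_edges H"
  by (simp add: other_half_def half_edges_def)

lemma fst_eq_imp_eq_or_other_half: "fst h' = fst h \<Longrightarrow> h' = h \<or> h' = other_half h"
  by (cases h; cases h') (auto simp: other_half_def)

lemma half_edges_at_eq: "half_edges_at H v = {h \<in> half_edges H. half_end H h = v}"
  by (simp add: half_edges_at_def half_edges_def)

lemma finite_half_edges_at: "finite (edges H) \<Longrightarrow> finite (half_edges_at H v)"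
  by (rule finite_subset[of _ "edges H \<times> UNIV"]) (auto simp: half_edges_at_def)

lemma half_end_in_verts: "is_graph H \<Longrightarrow> h \<in> half_edges H \<Longrightarrow> half_end H h \<in> verts H"
  by (auto simp: is_graph_def half_edges_def half_end_def)

lemma adjacent_iff_edge:
  "adjacent H x y \<longleftrightarrow> (\<exists>e \<in> edges H. \<exists>s. half_end H (e, s) = x \<and> half_end H (e, \<not> s) = y)"
  unfolding adjacent_def half_edges_def by (metis fst_conv other_half_Pair prod.collapse mem_Collect_eq)

lemma adjacent_sym: "adjacent H x y \<Longrightarrow> adjacent H y x"
  unfolding adjacent_def by (metis other_half_in_half_edges other_half_other_half)

lemma bipartite_half_ends_neq:
  "bipartite H \<Longrightarrow> h \<in> half_edges H \<Longrightarrow> half_end H h \<noteq> half_end H (other_half h)"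
  unfolding bipartite_def by metis

lemma bipartite_adjacent_neq: "bipartite H \<Longrightarrow> adjacent H x y \<Longrightarrow> x \<noteq> y"
  unfolding adjacent_def using bipartite_half_ends_neq by metis

lemma bipartite_no_triangle:
  assumes "bipartite H" "adjacent H x y" "adjacent H y z" "adjacent H z x"
  shows False
proof -
  obtain c :: "_ \<Rightarrow> bool" where "\<And>x y. adjacent H x y \<Longrightarrow> c x \<noteq> c y"
    using assms(1) unfolding bipartite_def adjacent_def by metis
  then show False using assms(2-4) by metis
qed

lemma no_parallel_edges_far_ends_neq:
  assumes "bipartite H" "no_parallel_edges H"
    and "h \<in> half_edges_at H v" "h' \<in> half_edges_at H v" "h \<noteq> h'"
  shows "half_end H (other_half h) \<noteq> half_end H (other_half h')"
proof
  assume far: "half_end H (other_half h) = half_end H (other_half h')"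
  have "h \<in> half_edges H" "h' \<in> half_edges H" "half_end H h = half_end H h'"
    using assms(3,4) by (auto simp: half_edges_at_eq)
  with assms(2) far have "fst h' = fst h" unfolding no_parallel_edges_def by metis
  with \<open>h \<noteq> h'\<close> have "h' = other_half h" using fst_eq_imp_eq_or_other_half by metis
  with \<open>half_end H h = half_end H h'\<close> \<open>h \<in> half_edges H\<close> show False
    using bipartite_half_ends_neq[OF assms(1)] by metis
qed

lemma assembly_design_other_half:
  "assembly_design H lam \<Longrightarrow> h \<in> half_edges H \<Longrightarrow> lam (other_half h) = hat (lam h)"
  by (cases h; cases "snd h") (auto simp: assembly_design_def half_edges_def other_half_def hat_def)

lemma hat_hat [simp]: "hat (hat x) = x"
  by (simp add: hat_def)

lemma hat_neq [simp]: "hat x \<noteq> x" "x \<noteq> hat x"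
  by (simp_all add: hat_def prod_eq_iff)

lemma bond_type_eq_imp_eq_or_hat: "bond_type y = bond_type x \<Longrightarrow> y = x \<or> y = hat x"
  by (cases x; cases y) (auto simp: bond_type_def hat_def)

lemma mem_tile_at:
  "finite (edges H) \<Longrightarrow> x \<in># tile_at H lam v \<longleftrightarrow> (\<exists>h \<in> half_edges_at H v. lam h = x)"
  by (auto simp: tile_at_def finite_half_edges_at)

lemma count_tile_at:
  "finite (edges H) \<Longrightarrow> count (tile_at H lam v) x = card {h \<in> half_edges_at H v. lam h = x}"
  by (simp add: tile_at_def count_image_mset_eq_card_vimage finite_half_edges_at)

section \<open>Swapping two half-edges\<close>

definition swap_half_edges :: "('v, 'e) mgraph \<Rightarrow> 'e \<times> bool \<Rightarrow> 'e \<times> bool \<Rightarrow> ('v, 'e) mgraph" where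
  "swap_half_edges H a b = H\<lparr>ends := \<lambda>e.
     (half_end H (transpose a b (e, False)), half_end H (transpose a b (e, True)))\<rparr>"

lemma swap_half_edges_simps [simp]:
  "verts (swap_half_edges H a b) = verts H"
  "edges (swap_half_edges H a b) = edges H"
  "half_edges (swap_half_edges H a b) = half_edges H"
  by (simp_all add: swap_half_edges_def half_edges_def)

lemma half_end_swap_half_edges:
  "half_end (swap_half_edges H a b) h = half_end H (transpose a b h)"
  by (cases h) (simp add: half_end_def swap_half_edges_def)

lemma transpose_in_half_edges:
  "a \<in> half_edges H \<Longrightarrow> b \<in> half_edges H \<Longrightarrow> transpose a b h \<in> half_edges H \<longleftrightarrow> h \<in> half_edges H"
  by (auto simp: transpose_def)

lemma half_edges_at_swap_half_edges:
  assumes "a \<in> half_edges H" "b \<in> half_edges H"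
  shows "half_edges_at (swap_half_edges H a b) v = transpose a b ` half_edges_at H v"
proof -
  have "h \<in> half_edges_at (swap_half_edges H a b) v \<longleftrightarrow> transpose a b h \<in> half_edges_at H v" for h
    using transpose_in_half_edges[OF assms] by (simp add: half_edges_at_eq half_end_swap_half_edges)
  then show ?thesis
    by (metis (no_types, lifting) image_iff set_eqI transpose_involutory)
qed

lemma tile_at_swap_half_edges:
  assumes "a \<in> half_edges H" "b \<in> half_edges H" "lam a = lam b"
  shows "tile_at (swap_half_edges H a b) lam v = tile_at H lam v"
proof -
  have "lam \<circ> transpose a b = lam"
    using assms(3) by (auto simp: transpose_def)
  then show ?thesis
    by (simp add: tile_at_def half_edges_at_swap_half_edges[OF assms(1,2)]
        image_mset_mset_set[symmetric] multiset.map_comp)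
qed

lemma realizes_swap_half_edges:
  assumes "assembly_design H lam" "pot_of H lam \<subseteq> P"
    and "a \<in> half_edges H" "b \<in> half_edges H" "lam a = lam b"
  shows "realizes P (swap_half_edges H a b)"
proof -
  have "assembly_design (swap_half_edges H a b) lam"
    using assms(1) by (simp add: assembly_design_def)
  moreover have "pot_of (swap_half_edges H a b) lam = pot_of H lam"
    by (simp add: pot_of_def tile_at_swap_half_edges[OF assms(3-5)])
  ultimately show ?thesis
    using assms(2) unfolding realizes_def by metis
qed

lemma is_graph_swap_half_edges:
  assumes "is_graph H" "a \<in> half_edges H" "b \<in> half_edges H"
  shows "is_graph (swap_half_edges H a b)"
proof -
  have "half_end (swap_half_edges H a b) (e, s) \<in> verts H" if "e \<in> edges H" for e s
    using that half_end_in_verts[OF assms(1)] transpose_in_half_edges[OF assms(2,3)]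
    by (simp add: half_end_swap_half_edges half_edges_def)
  from this[of _ False] this[of _ True] show ?thesis
    using assms(1) by (simp add: is_graph_def half_end_def)
qed

lemma adjacent_swap_half_edges_kept:
  assumes "h \<in> half_edges H" "h \<notin> {a, b}" "other_half h \<notin> {a, b}"
  shows "adjacent (swap_half_edges H a b) (half_end H h) (half_end H (other_half h))"
  unfolding adjacent_def
proof (rule bexI[of _ h])
  show "h \<in> half_edges (swap_half_edges H a b)"
    using assms(1) by simp
  show "half_end (swap_half_edges H a b) h = half_end H h \<and>
      half_end (swap_half_edges H a b) (other_half h) = half_end H (other_half h)"
    using assms(2,3) by (simp add: half_end_swap_half_edges)
qed

lemma adjacent_swap_half_edges_moved:
  assumes "b \<in> half_edges H" "other_half b \<noteq> a"
  shows "adjacent (swap_half_edges H a b) (half_end H a) (half_end H (other_half b))"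
  unfolding adjacent_def
  by (rule bexI[of _ b]) (use assms in \<open>simp_all add: half_end_swap_half_edges\<close>)

section \<open>Isomorphism invariants and Scenario 3\<close>

lemma mgraph_iso_half_edges:
  assumes "mgraph_iso K G"
  obtains g f where "inj_on g (edges K)"
    and "\<And>h. h \<in> half_edges K \<Longrightarrow> \<exists>s. (g (fst h), s) \<in> half_edges G \<and>
           half_end G (g (fst h), s) = f (half_end K h) \<and>
           half_end G (g (fst h), \<not> s) = f (half_end K (other_half h))"
proof -
  from assms obtain f g where g: "bij_betw g (edges K) (edges G)"
    and ends: "\<forall>e\<in>edges K. ends G (g e) = (f (fst (ends K e)), f (snd (ends K e))) \<or>
                         ends G (g e) = (f (snd (ends K e)), f (fst (ends K e)))"
    unfolding mgraph_iso_def by metis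
  have "\<exists>s. (g e, s) \<in> half_edges G \<and> half_end G (g e, s) = f (half_end K (e, t)) \<and>
           half_end G (g e, \<not> s) = f (half_end K (e, \<not> t))" if e: "e \<in> edges K" for e t
  proof -
    have in_G: "(g e, s) \<in> half_edges G" for s
      using g e by (auto simp: half_edges_def bij_betw_def)
    from ends e consider
        (same) "ends G (g e) = (f (fst (ends K e)), f (snd (ends K e)))"
      | (flipped) "ends G (g e) = (f (snd (ends K e)), f (fst (ends K e)))"
      by blast
    then show ?thesis
    proof cases
      case same
      then show ?thesis using in_G by (intro exI[of _ t]) (simp add: half_end_def)
    next
      case flipped
      then show ?thesis using in_G by (intro exI[of _ "\<not> t"]) (simp add: half_end_def)
    qed
  qed
  note half_ends = this
  show thesis
  proof (rule that[of g f])
    show "inj_on g (edges K)"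
      using g by (simp add: bij_betw_def)
  next
    fix h assume "h \<in> half_edges K"
    then show "\<exists>s. (g (fst h), s) \<in> half_edges G \<and> half_end G (g (fst h), s) = f (half_end K h) \<and>
        half_end G (g (fst h), \<not> s) = f (half_end K (other_half h))"
      using half_ends[of "fst h" "snd h"] by (simp add: half_edges_def other_half_def)
  qed
qed

lemma bipartite_mgraph_iso:
  assumes "mgraph_iso K G" "bipartite G"
  shows "bipartite K"
proof -
  obtain g f where "inj_on g (edges K)"
    and fg: "\<And>h. h \<in> half_edges K \<Longrightarrow> \<exists>s. (g (fst h), s) \<in> half_edges G \<and>
           half_end G (g (fst h), s) = f (half_end K h) \<and>
           half_end G (g (fst h), \<not> s) = f (half_end K (other_half h))"
    using mgraph_iso_half_edges[OF assms(1)] by blast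
  obtain c :: "_ \<Rightarrow> bool" where c: "\<forall>h \<in> half_edges G. c (half_end G h) \<noteq> c (half_end G (other_half h))"
    using assms(2) unfolding bipartite_def by blast
  have colour: "(c \<circ> f) (half_end K h) \<noteq> (c \<circ> f) (half_end K (other_half h))"
    if h: "h \<in> half_edges K" for h
  proof -
    obtain s where s: "(g (fst h), s) \<in> half_edges G" "half_end G (g (fst h), s) = f (half_end K h)"
      "half_end G (g (fst h), \<not> s) = f (half_end K (other_half h))"
      using fg[OF h] by blast
    have "c (half_end G (g (fst h), s)) \<noteq> c (half_end G (other_half (g (fst h), s)))"
      using c s(1) by blast
    then show ?thesis
      using s(2,3) by simp
  qed
  then show ?thesis
    unfolding bipartite_def by (intro exI[of _ "c \<circ> f"] ballI)
qed

lemma no_parallel_edges_mgraph_iso: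
  assumes "mgraph_iso K G" "no_parallel_edges G"
  shows "no_parallel_edges K"
  unfolding no_parallel_edges_def
proof (intro ballI impI)
  fix h h' assume h: "h \<in> half_edges K" "h' \<in> half_edges K"
    and near: "half_end K h = half_end K h'"
    and far: "half_end K (other_half h) = half_end K (other_half h')"
  obtain g f where g: "inj_on g (edges K)"
    and fg: "\<And>h. h \<in> half_edges K \<Longrightarrow> \<exists>s. (g (fst h), s) \<in> half_edges G \<and>
           half_end G (g (fst h), s) = f (half_end K h) \<and>
           half_end G (g (fst h), \<not> s) = f (half_end K (other_half h))"
    using mgraph_iso_half_edges[OF assms(1)] by blast
  obtain s where s: "(g (fst h), s) \<in> half_edges G" "half_end G (g (fst h), s) = f (half_end K h)"
      "half_end G (g (fst h), \<not> s) = f (half_end K (other_half h))"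
    using fg[OF h(1)] by blast
  obtain s' where s': "(g (fst h'), s') \<in> half_edges G" "half_end G (g (fst h'), s') = f (half_end K h')"
      "half_end G (g (fst h'), \<not> s') = f (half_end K (other_half h'))"
    using fg[OF h(2)] by blast
  have "g (fst h) = g (fst h')"
    using assms(2)[unfolded no_parallel_edges_def, rule_format, OF s(1) s'(1)] s s' near far
    by simp
  with g h show "fst h = fst h'"
    by (auto simp: inj_on_def half_edges_def)
qed

definition nat_relabel :: "('v::countable, 'e::countable) mgraph \<Rightarrow> (nat, nat) mgraph" where
  "nat_relabel H = \<lparr>verts = to_nat ` verts H, edges = to_nat ` edges H,
     ends = \<lambda>n. map_prod to_nat to_nat (ends H (from_nat n))\<rparr>"

lemma nat_relabel_simps [simp]:
  "verts (nat_relabel H) = to_nat ` verts H"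
  "edges (nat_relabel H) = to_nat ` edges H"
  by (simp_all add: nat_relabel_def)

lemma half_end_nat_relabel [simp]:
  "half_end (nat_relabel H) (to_nat e, s) = to_nat (half_end H (e, s))"
  by (simp add: nat_relabel_def half_end_def)

lemma half_edges_at_nat_relabel:
  "half_edges_at (nat_relabel H) (to_nat v) = apfst to_nat ` half_edges_at H v"
proof (intro equalityI subsetI)
  fix h assume "h \<in> half_edges_at (nat_relabel H) (to_nat v)"
  then obtain e s where "h = (to_nat e, s)" "e \<in> edges H" "half_end (nat_relabel H) h = to_nat v"
    unfolding half_edges_at_def by (cases h) auto
  then have "(e, s) \<in> half_edges_at H v" "h = apfst to_nat (e, s)"
    by (simp_all add: half_edges_at_def)
  then show "h \<in> apfst to_nat ` half_edges_at H v"
    by (rule rev_image_eqI)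
next
  fix h assume "h \<in> apfst to_nat ` half_edges_at H v"
  then obtain e s where "h = (to_nat e, s)" "(e, s) \<in> half_edges_at H v"
    by auto
  then show "h \<in> half_edges_at (nat_relabel H) (to_nat v)"
    by (simp add: half_edges_at_def)
qed

lemma tile_at_nat_relabel:
  fixes H :: "('v::countable, 'e::countable) mgraph"
  shows "tile_at (nat_relabel H) (lam \<circ> apfst from_nat) (to_nat v) = tile_at H lam v"
proof -
  have "inj (apfst (to_nat :: 'e \<Rightarrow> nat))"
    by (rule injI) (simp add: prod_eq_iff)
  then have "mset_set (half_edges_at (nat_relabel H) (to_nat v)) =
      image_mset (apfst to_nat) (mset_set (half_edges_at H v))"
    by (simp add: half_edges_at_nat_relabel image_mset_mset_set[OF inj_on_subset[OF _ subset_UNIV]])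
  moreover have "lam \<circ> apfst from_nat \<circ> apfst (to_nat :: 'e \<Rightarrow> nat) = lam"
    by (rule ext) (simp add: apfst_def map_prod_def split_beta)
  ultimately show ?thesis
    by (simp add: tile_at_def multiset.map_comp)
qed

lemma realizes_nat_relabel: "realizes P H \<Longrightarrow> realizes P (nat_relabel H)"
  unfolding realizes_def
proof (elim exE conjE, intro exI conjI)
  fix lam assume "assembly_design H lam" "pot_of H lam \<subseteq> P"
  then show "assembly_design (nat_relabel H) (lam \<circ> apfst from_nat)"
    and "pot_of (nat_relabel H) (lam \<circ> apfst from_nat) \<subseteq> P"
    by (auto simp: assembly_design_def pot_of_def tile_at_nat_relabel)
qed

lemma is_graph_nat_relabel: "is_graph H \<Longrightarrow> is_graph (nat_relabel H)"
  by (auto simp: is_graph_def nat_relabel_def)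

lemma mgraph_iso_nat_relabel: "mgraph_iso (nat_relabel K) G \<Longrightarrow> mgraph_iso K G"
  unfolding mgraph_iso_def
proof (elim exE conjE, intro exI conjI)
  fix f g
  assume f: "bij_betw f (verts (nat_relabel K)) (verts G)"
    and g: "bij_betw g (edges (nat_relabel K)) (edges G)"
    and ends: "\<forall>e\<in>edges (nat_relabel K).
      ends G (g e) = (f (fst (ends (nat_relabel K) e)), f (snd (ends (nat_relabel K) e))) \<or>
      ends G (g e) = (f (snd (ends (nat_relabel K) e)), f (fst (ends (nat_relabel K) e)))"
  show "bij_betw (f \<circ> to_nat) (verts K) (verts G)" "bij_betw (g \<circ> to_nat) (edges K) (edges G)"
    using bij_betw_trans[OF inj_on_imp_bij_betw[OF inj_on_subset[OF inj_to_nat]]] f g by simp_all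
  show "\<forall>e\<in>edges K.
      ends G ((g \<circ> to_nat) e) = ((f \<circ> to_nat) (fst (ends K e)), (f \<circ> to_nat) (snd (ends K e))) \<or>
      ends G ((g \<circ> to_nat) e) = ((f \<circ> to_nat) (snd (ends K e)), (f \<circ> to_nat) (fst (ends K e)))"
    using ends by (simp add: nat_relabel_def map_prod_def split_beta)
qed

lemma realizes_scenario3_same_order_iso:
  fixes K :: "('v::countable, 'e::countable) mgraph"
  assumes "realizes_scenario3 P G" "is_graph K" "realizes P K" "card (verts K) = card (verts G)"
  shows "mgraph_iso K G"
proof -
  from assms(1) have "\<forall>H :: (nat, nat) mgraph. is_graph H \<and> realizes P H \<longrightarrow>
      card (verts H) = card (verts G) \<longrightarrow> mgraph_iso H G"
    by (simp add: realizes_scenario3_def)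
  then have "mgraph_iso (nat_relabel K) G"
    using is_graph_nat_relabel[OF assms(2)] realizes_nat_relabel[OF assms(3)] assms(4)
    by (simp add: card_image)
  then show ?thesis by (rule mgraph_iso_nat_relabel)
qed

lemma realizes_scenario3_swap_half_edges_iso:
  fixes G :: "('v::countable, 'e::countable) mgraph"
  assumes "realizes_scenario3 P G" "is_graph G" "assembly_design G lam" "pot_of G lam \<subseteq> P"
    and "a \<in> half_edges G" "b \<in> half_edges G" "lam a = lam b"
  shows "mgraph_iso (swap_half_edges G a b) G"
  using assms(1) is_graph_swap_half_edges[OF assms(2,5,6)]
    realizes_swap_half_edges[OF assms(3-7)]
  by (rule realizes_scenario3_same_order_iso) simp

definition swaps_keep_simple_bipartite :: "('v, 'e) mgraph \<Rightarrow> ('e \<times> bool \<Rightarrow> 'c) \<Rightarrow> bool" where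
  "swaps_keep_simple_bipartite H lam \<longleftrightarrow>
     (\<forall>a \<in> half_edges H. \<forall>b \<in> half_edges H. lam a = lam b \<longrightarrow>
        bipartite (swap_half_edges H a b) \<and> no_parallel_edges (swap_half_edges H a b))"

lemma realizes_scenario3_swaps_keep_simple_bipartite:
  fixes G :: "('v::countable, 'e::countable) mgraph"
  assumes "realizes_scenario3 P G" "is_graph G" "assembly_design G lam" "pot_of G lam \<subseteq> P"
    and "bipartite G" "no_parallel_edges G"
  shows "swaps_keep_simple_bipartite G lam"
  unfolding swaps_keep_simple_bipartite_def
proof (intro ballI impI conjI)
  fix a b assume "a \<in> half_edges G" "b \<in> half_edges G" "lam a = lam b"
  then have "mgraph_iso (swap_half_edges G a b) G"
    by (rule realizes_scenario3_swap_half_edges_iso[OF assms(1-4)])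
  then show "bipartite (swap_half_edges G a b)" "no_parallel_edges (swap_half_edges G a b)"
    using assms(5,6) bipartite_mgraph_iso no_parallel_edges_mgraph_iso by blast+
qed

lemma complementary_labels_apart:
  assumes swaps: "swaps_keep_simple_bipartite H lam" and design: "assembly_design H lam"
    and a: "a \<in> half_edges H" and b: "b \<in> half_edges H"
    and "a \<noteq> b" "half_end H a = half_end H b"
  shows "lam b \<noteq> hat (lam a)"
proof
  \<comment> \<open>The swap turns the edge of b into a loop at the common vertex.\<close>
  let ?K = "swap_half_edges H a (other_half b)"
  assume "lam b = hat (lam a)"
  then have "lam a = lam (other_half b)"
    using assembly_design_other_half[OF design b] by simp
  then have "bipartite ?K"
    using swaps a b unfolding swaps_keep_simple_bipartite_def by simp
  moreover have "half_end ?K b = half_end ?K (other_half b)"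
    using assms(5,6) by (simp add: half_end_swap_half_edges)
  moreover have "b \<in> half_edges ?K"
    using b by simp
  ultimately show False
    using bipartite_half_ends_neq by blast
qed

lemma equal_labels_far_end_not_adjacent:
  assumes swaps: "swaps_keep_simple_bipartite H lam" and bip: "bipartite H"
    and p: "p \<in> half_edges H" and q: "q \<in> half_edges H" and "lam p = lam q"
    and near: "half_end H p \<noteq> half_end H q"
    and far: "half_end H (other_half p) \<noteq> half_end H (other_half q)"
  shows "\<not> adjacent H (half_end H p) (half_end H (other_half q))"
proof
  \<comment> \<open>After the swap both h and q join the end of p to the far end of q.\<close>
  let ?K = "swap_half_edges H p q"
  assume "adjacent H (half_end H p) (half_end H (other_half q))"
  then obtain h where h: "h \<in> half_edges H" "half_end H h = half_end H p"
    "half_end H (other_half h) = half_end H (other_half q)"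
    unfolding adjacent_def by blast
  have "no_parallel_edges ?K"
    using swaps p q \<open>lam p = lam q\<close> unfolding swaps_keep_simple_bipartite_def by simp
  have w_v: "half_end H (other_half q) \<noteq> half_end H p"
    using bipartite_half_ends_neq[OF bip h(1)] h by simp
  have w_v': "half_end H (other_half q) \<noteq> half_end H q"
    using bipartite_half_ends_neq[OF bip q] by simp
  have "h \<noteq> p" using far h(3) by auto
  moreover have "h \<noteq> q" using near h(2) by auto
  moreover have "other_half h \<noteq> p" using w_v h(3) by auto
  moreover have "other_half h \<noteq> q" using w_v' h(3) by auto
  moreover have "other_half q \<noteq> p" using w_v by auto
  ultimately have ends: "half_end ?K h = half_end ?K q"
      "half_end ?K (other_half h) = half_end ?K (other_half q)"
    using h by (simp_all add: half_end_swap_half_edges)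
  have "h \<in> half_edges ?K" "q \<in> half_edges ?K"
    using h(1) q by simp_all
  then have "fst h = fst q"
    using no_parallel_edgesD[OF \<open>no_parallel_edges ?K\<close> _ _ ends] by blast
  then have "h = other_half q"
    using fst_eq_imp_eq_or_other_half \<open>h \<noteq> q\<close> by blast
  with h(2) w_v show False
    by simp
qed

lemma equal_labels_common_neighbour:
  assumes swaps: "swaps_keep_simple_bipartite H lam" and bip: "bipartite H"
    and p: "p \<in> half_edges H" and q: "q \<in> half_edges H" and "lam p = lam q"
    and near: "half_end H p \<noteq> half_end H q" "\<not> adjacent H (half_end H p) (half_end H q)"
    and m: "adjacent H (half_end H p) m" "adjacent H m (half_end H (other_half q))"
  shows "m = half_end H (other_half p)"
proof (rule ccontr)
  \<comment> \<open>Otherwise, after the swap, the vertex of p, m and the far end of q form a triangle.\<close>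
  let ?K = "swap_half_edges H p q"
  let ?v = "half_end H p" and ?v' = "half_end H q" and ?w = "half_end H (other_half q)"
  assume m_far: "m \<noteq> half_end H (other_half p)"
  obtain h1 where h1: "h1 \<in> half_edges H" "half_end H h1 = ?v" "half_end H (other_half h1) = m"
    using m(1) unfolding adjacent_def by blast
  obtain h2 where h2: "h2 \<in> half_edges H" "half_end H h2 = m" "half_end H (other_half h2) = ?w"
    using m(2) unfolding adjacent_def by blast
  have adj_w: "adjacent H ?v' ?w"
    using q unfolding adjacent_def by blast
  have w_ne: "?w \<noteq> ?v" "?w \<noteq> ?v'"
    using adjacent_sym[OF adj_w] near(2) bipartite_adjacent_neq[OF bip adj_w] by auto
  have m_ne: "m \<noteq> ?v" "m \<noteq> ?v'"
    using m(1) near(2) bipartite_adjacent_neq[OF bip m(1)] by auto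
  have h1_kept: "h1 \<notin> {p, q}" "other_half h1 \<notin> {p, q}"
    using near(1) m_far m_ne h1 by auto
  have h2_kept: "h2 \<notin> {p, q}" "other_half h2 \<notin> {p, q}"
    using w_ne m_ne h2 by auto
  have "other_half q \<noteq> p"
    using w_ne by auto
  have triangle: "adjacent ?K ?v m" "adjacent ?K m ?w" "adjacent ?K ?w ?v"
    using adjacent_swap_half_edges_kept[OF h1(1) h1_kept, unfolded h1(2,3)]
      adjacent_swap_half_edges_kept[OF h2(1) h2_kept, unfolded h2(2,3)]
      adjacent_sym[OF adjacent_swap_half_edges_moved[OF q \<open>other_half q \<noteq> p\<close>]] .
  have "bipartite ?K"
    using swaps p q \<open>lam p = lam q\<close> unfolding swaps_keep_simple_bipartite_def by simp
  then show False
    using triangle by (rule bipartite_no_triangle)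
qed

lemma equal_tiles_not_adjacent:
  assumes swaps: "swaps_keep_simple_bipartite H lam" and design: "assembly_design H lam"
    and fin: "finite (edges H)" and "v \<noteq> v'" and tiles: "tile_at H lam v = tile_at H lam v'"
  shows "\<not> adjacent H v v'"
proof
  assume "adjacent H v v'"
  then obtain h where h: "h \<in> half_edges H" "half_end H h = v" "half_end H (other_half h) = v'"
    unfolding adjacent_def by blast
  have "other_half h \<in> half_edges_at H v'"
    using h by (simp add: half_edges_at_eq)
  then have "lam (other_half h) \<in># tile_at H lam v"
    unfolding tiles mem_tile_at[OF fin] by blast
  then obtain b where b: "b \<in> half_edges_at H v" "lam b = lam (other_half h)"
    unfolding mem_tile_at[OF fin] by blast
  then have "lam b = hat (lam h)"
    using assembly_design_other_half[OF design h(1)] by simp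
  then have "b \<noteq> h"
    by auto
  with b h \<open>lam b = hat (lam h)\<close> show False
    using complementary_labels_apart[OF swaps design h(1)] by (auto simp: half_edges_at_eq)
qed

lemma two_le_count_tile_at_iff:
  assumes "finite (edges H)"
  shows "2 \<le> count (tile_at H lam v) x \<longleftrightarrow>
    (\<exists>a \<in> half_edges_at H v. \<exists>b \<in> half_edges_at H v. a \<noteq> b \<and> lam a = x \<and> lam b = x)"
    (is "_ \<longleftrightarrow> ?pair")
proof -
  let ?S = "{h \<in> half_edges_at H v. lam h = x}"
  have fin: "finite ?S"
    using finite_half_edges_at[OF assms] by simp
  have "2 \<le> card ?S \<longleftrightarrow> ?pair"
  proof
    assume "2 \<le> card ?S"
    then obtain T where T: "T \<subseteq> ?S" "card T = 2" "finite T"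
      by (rule obtain_subset_with_card_n)
    from T(2) obtain a b where "T = {a, b}" "a \<noteq> b"
      unfolding card_2_iff by blast
    with T(1) show ?pair
      by blast
  next
    assume ?pair
    then obtain a b where ab: "{a, b} \<subseteq> ?S" "a \<noteq> b"
      by blast
    have "card {a, b} \<le> card ?S"
      by (rule card_mono[OF fin ab(1)])
    with ab(2) show "2 \<le> card ?S"
      by simp
  qed
  then show ?thesis
    by (simp add: count_tile_at[OF assms])
qed

lemma same_bond_type_imp_same_label:
  assumes "swaps_keep_simple_bipartite H lam" "assembly_design H lam"
    and "a \<in> half_edges_at H v" "b \<in> half_edges_at H v" "a \<noteq> b"
    and "bond_type (lam a) = bond_type (lam b)"
  shows "lam a = lam b"
  using bond_type_eq_imp_eq_or_hat[OF assms(6)[symmetric]] complementary_labels_apart[OF assms(1,2)]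
    assms(3-5) by (auto simp: half_edges_at_eq)

lemma repeated_label_far_end_distant:
  assumes swaps: "swaps_keep_simple_bipartite H lam"
    and bip: "bipartite H" and simple: "no_parallel_edges H"
    and p: "p1 \<in> half_edges_at H v" "p2 \<in> half_edges_at H v" "p1 \<noteq> p2"
    and q: "q \<in> half_edges_at H v'" and lab: "lam p1 = lam q" "lam p2 = lam q"
    and "v \<noteq> v'" "\<not> adjacent H v v'"
  shows "\<not> adjacent H v (half_end H (other_half q))"
    and "\<not> (adjacent H v m \<and> adjacent H m (half_end H (other_half q)))"
proof -
  have far: "half_end H (other_half p1) \<noteq> half_end H (other_half p2)"
    by (rule no_parallel_edges_far_ends_neq[OF bip simple p])
  have p_in: "p1 \<in> half_edges H" "p2 \<in> half_edges H" "half_end H p1 = v" "half_end H p2 = v"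
    and q_in: "q \<in> half_edges H" "half_end H q = v'"
    using p q by (auto simp: half_edges_at_eq)
  show "\<not> adjacent H v (half_end H (other_half q))"
  proof (cases "half_end H (other_half p1) = half_end H (other_half q)")
    case True
    with far have "half_end H (other_half p2) \<noteq> half_end H (other_half q)" by simp
    then show ?thesis
      using equal_labels_far_end_not_adjacent[OF swaps bip p_in(2) q_in(1) lab(2)] p_in q_in \<open>v \<noteq> v'\<close>
      by simp
  next
    case False
    then show ?thesis
      using equal_labels_far_end_not_adjacent[OF swaps bip p_in(1) q_in(1) lab(1)] p_in q_in \<open>v \<noteq> v'\<close>
      by simp
  qed
  show "\<not> (adjacent H v m \<and> adjacent H m (half_end H (other_half q)))"
  proof
    assume "adjacent H v m \<and> adjacent H m (half_end H (other_half q))"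
    then have "m = half_end H (other_half p1)" "m = half_end H (other_half p2)"
      using equal_labels_common_neighbour[OF swaps bip p_in(1) q_in(1) lab(1)]
        equal_labels_common_neighbour[OF swaps bip p_in(2) q_in(1) lab(2)]
        \<open>v \<noteq> v'\<close> \<open>\<not> adjacent H v v'\<close>
      unfolding p_in(3,4) q_in(2) by blast+
    with far show False
      by simp
  qed
qed

section \<open>The cube\<close>

lemma less_8_cases: "(v::nat) < 8 \<Longrightarrow> v = 0 \<or> v = 1 \<or> v = 2 \<or> v = 3 \<or> v = 4 \<or> v = 5 \<or> v = 6 \<or> v = 7"
  by auto

lemma less_3_cases: "(i::nat) < 3 \<Longrightarrow> i = 0 \<or> i = 1 \<or> i = 2"
  by auto

lemma edges_Q3:
  "edges Q3 = {(0,0), (2,0), (4,0), (6,0), (0,1), (1,1), (4,1), (5,1), (0,2), (1,2), (2,2), (3,2)}"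
  (is "_ = ?E")
proof (rule set_eqI)
  fix x :: "nat \<times> nat"
  obtain v i where x: "x = (v, i)" by fastforce
  have "v < 8 \<Longrightarrow> i < 3 \<Longrightarrow> \<not> bit v i \<Longrightarrow> (v, i) \<in> ?E"
    by (drule less_8_cases, drule less_3_cases, elim disjE) (simp_all add: bit_iff_odd)
  moreover have "(v, i) \<in> ?E \<Longrightarrow> v < 8 \<and> i < 3 \<and> \<not> bit v i"
    by (simp only: insert_iff empty_iff prod.inject, elim disjE) (simp_all add: bit_iff_odd)
  moreover have "x \<in> edges Q3 \<longleftrightarrow> v < 8 \<and> i < 3 \<and> \<not> bit v i"
    by (simp add: Q3_def x)
  ultimately show "x \<in> edges Q3 \<longleftrightarrow> x \<in> ?E"
    unfolding x by argo
qed

lemma half_end_Q3: "half_end Q3 ((u, i), s) = (if s then u + 2 ^ i else u)"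
  by (simp add: half_end_def Q3_def)

lemma half_edges_Q3: "h \<in> half_edges Q3 \<longleftrightarrow> fst h \<in> edges Q3"
  by (simp add: half_edges_def)

lemma verts_Q3: "verts Q3 = {..<8}"
  by (auto simp: Q3_def)

lemma ends_Q3: "ends Q3 (v, i) = (v, v + 2 ^ i)"
  by (simp add: Q3_def)

lemma is_graph_Q3: "is_graph Q3"
proof -
  have "v < 8 \<and> v + 2 ^ i < 8" if "(v, i) \<in> edges Q3" for v i
    using that unfolding edges_Q3
    by (simp only: insert_iff empty_iff prod.inject, elim disjE) simp_all
  then show ?thesis
    unfolding is_graph_def by (auto simp: verts_Q3 ends_Q3 edges_Q3)
qed

lemma bipartite_Q3: "bipartite Q3"
proof -
  let ?c = "\<lambda>v :: nat. v \<in> {1, 2, 4, 7}" \<comment> \<open>an odd number of one bits\<close>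
  have edge: "?c u \<noteq> ?c (u + 2 ^ i)" if "(u, i) \<in> edges Q3" for u i
    using that unfolding edges_Q3
    by (simp only: insert_iff empty_iff prod.inject, elim disjE) simp_all
  have "?c (half_end Q3 h) \<noteq> ?c (half_end Q3 (other_half h))" if "h \<in> half_edges Q3" for h
  proof -
    obtain u i s where h: "h = ((u, i), s)" by (metis prod.collapse)
    then show ?thesis
      using edge[of u i] that by (cases s) (simp_all add: half_end_Q3 half_edges_Q3)
  qed
  then show ?thesis
    unfolding bipartite_def by (intro exI[of _ ?c] ballI)
qed

lemma no_parallel_edges_Q3: "no_parallel_edges Q3"
  unfolding no_parallel_edges_def
proof (intro ballI impI)
  fix h h' assume near: "half_end Q3 h = half_end Q3 h'"
    and far: "half_end Q3 (other_half h) = half_end Q3 (other_half h')"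
  obtain u i s where h: "h = ((u, i), s)" by (metis prod.collapse)
  obtain u' i' s' where h': "h' = ((u', i'), s')" by (metis prod.collapse)
  from near far have "(u = u' \<and> u + 2 ^ i = u' + 2 ^ i') \<or> (u = u' + 2 ^ i' \<and> u + 2 ^ i = u')"
    unfolding h h' by (cases s; cases s') (simp_all add: half_end_Q3)
  then have "u = u' \<and> i = i'"
    by auto
  then show "fst h = fst h'"
    by (simp add: h h')
qed

definition Q3_half_edge :: "nat \<Rightarrow> nat \<Rightarrow> (nat \<times> nat) \<times> bool" where
  "Q3_half_edge v i = (if bit v i then ((v - 2 ^ i, i), True) else ((v, i), False))"

lemma Q3_half_edge_in_half_edges_at:
  "v < 8 \<Longrightarrow> i < 3 \<Longrightarrow> Q3_half_edge v i \<in> half_edges_at Q3 v"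
  unfolding Q3_half_edge_def
  by (drule less_8_cases, drule less_3_cases, elim disjE)
    (simp_all add: bit_iff_odd half_edges_at_eq half_edges_Q3 edges_Q3 half_end_Q3)

lemma Q3_half_edge_half_end:
  assumes "(u, i) \<in> edges Q3"
  shows "i < 3 \<and> ((u, i), s) = Q3_half_edge (half_end Q3 ((u, i), s)) i"
  using assms unfolding edges_Q3 Q3_half_edge_def
  by (simp only: insert_iff empty_iff prod.inject, elim disjE; cases s)
    (simp_all add: half_end_Q3 bit_iff_odd)

lemma card_half_edges_at_Q3:
  assumes "v < 8"
  shows "card (half_edges_at Q3 v) = 3"
proof -
  have "half_edges_at Q3 v \<subseteq> Q3_half_edge v ` {..<3}"
  proof
    fix h assume h_at: "h \<in> half_edges_at Q3 v"
    obtain u i s where h: "h = ((u, i), s)" by (metis prod.collapse)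
    with h_at have "(u, i) \<in> edges Q3" "half_end Q3 ((u, i), s) = v"
      by (simp_all add: half_edges_at_eq half_edges_Q3)
    then show "h \<in> Q3_half_edge v ` {..<3}"
      using Q3_half_edge_half_end h by blast
  qed
  then have "half_edges_at Q3 v = Q3_half_edge v ` {..<3}"
    using Q3_half_edge_in_half_edges_at[OF assms] by blast
  moreover have "inj_on (Q3_half_edge v) {..<3}"
    by (rule inj_onI) (simp add: Q3_half_edge_def split: if_splits)
  ultimately show ?thesis
    by (simp add: card_image)
qed

lemma adjacent_Q3_iff:
  "adjacent Q3 x y \<longleftrightarrow> (x, y) \<in> {(0,1), (1,0), (2,3), (3,2), (4,5), (5,4), (6,7), (7,6),
     (0,2), (2,0), (1,3), (3,1), (4,6), (6,4), (5,7), (7,5),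
     (0,4), (4,0), (1,5), (5,1), (2,6), (6,2), (3,7), (7,3)}"
  (is "_ \<longleftrightarrow> (x, y) \<in> ?A")
proof
  assume "adjacent Q3 x y"
  then obtain u i s where "(u, i) \<in> edges Q3" "half_end Q3 ((u, i), s) = x" "half_end Q3 ((u, i), \<not> s) = y"
    unfolding adjacent_iff_edge by fastforce
  then show "(x, y) \<in> ?A"
    unfolding edges_Q3
    by (simp only: insert_iff empty_iff prod.inject, elim disjE; cases s) (auto simp: half_end_Q3)
next
  assume "(x, y) \<in> ?A"
  then show "adjacent Q3 x y"
    unfolding adjacent_iff_edge edges_Q3
    by (simp only: insert_iff empty_iff prod.inject, elim disjE) (simp_all add: half_end_Q3 ex_bool_eq)
qed

text \<open>The vertex \<open>7 - x\<close> is the antipode of \<open>x\<close>, with all three bits flipped.\<close>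

lemma Q3_within_distance_two:
  assumes "x < 8" "y < 8" "y \<noteq> 7 - x"
  shows "x = y \<or> adjacent Q3 x y \<or> (\<exists>m. adjacent Q3 x m \<and> adjacent Q3 m y)"
  using assms unfolding adjacent_Q3_iff
  by (drule_tac less_8_cases, drule_tac less_8_cases, elim disjE)
    (simp_all add: conj_disj_distribR ex_disj_distrib)

lemma Q3_far_end_near:
  assumes "vi \<in> verts Q3" "\<not> adjacent Q3 vi vj" "q \<in> half_edges_at Q3 vj"
    and not_antipode: "half_end Q3 (other_half q) \<noteq> 7 - vi"
  shows "adjacent Q3 vi (half_end Q3 (other_half q)) \<or>
    (\<exists>m. adjacent Q3 vi m \<and> adjacent Q3 m (half_end Q3 (other_half q)))"
proof -
  let ?w = "half_end Q3 (other_half q)"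
  have q: "q \<in> half_edges Q3" "half_end Q3 q = vj"
    using assms(3) by (simp_all add: half_edges_at_eq)
  then have "adjacent Q3 vj ?w"
    unfolding adjacent_def by blast
  then have "vi \<noteq> ?w"
    using assms(2) adjacent_sym[of Q3 vj] by auto
  have "vi < 8" "?w < 8"
    using half_end_in_verts[OF is_graph_Q3, of "other_half q"] q assms(1) by (simp_all add: verts_Q3)
  from Q3_within_distance_two[OF this not_antipode] \<open>vi \<noteq> ?w\<close> show ?thesis
    by blast
qed

lemma Q3_equal_tiles_no_repeated_label:
  assumes swaps: "swaps_keep_simple_bipartite Q3 lam" and design: "assembly_design Q3 lam"
    and vi: "vi \<in> verts Q3" and vj: "vj \<in> verts Q3" and "vi \<noteq> vj"
    and tiles: "tile_at Q3 lam vi = tile_at Q3 lam vj"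
    and p: "p1 \<in> half_edges_at Q3 vi" "p2 \<in> half_edges_at Q3 vi" "p1 \<noteq> p2"
  shows "lam p1 \<noteq> lam p2"
proof
  assume lab: "lam p1 = lam p2"
  have fin: "finite (edges Q3)"
    by (simp add: edges_Q3)
  have apart: "\<not> adjacent Q3 vi vj"
    by (rule equal_tiles_not_adjacent[OF swaps design fin \<open>vi \<noteq> vj\<close> tiles])
  have "\<exists>a \<in> half_edges_at Q3 vi. \<exists>b \<in> half_edges_at Q3 vi. a \<noteq> b \<and> lam a = lam p1 \<and> lam b = lam p1"
    using p lab by (intro bexI[of _ p1] bexI[of _ p2]) simp_all
  then have "2 \<le> count (tile_at Q3 lam vj) (lam p1)"
    unfolding tiles[symmetric] two_le_count_tile_at_iff[OF fin] .
  then have "\<exists>a \<in> half_edges_at Q3 vj. \<exists>b \<in> half_edges_at Q3 vj. a \<noteq> b \<and> lam a = lam p1 \<and> lam b = lam p1"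
    unfolding two_le_count_tile_at_iff[OF fin] .
  then obtain q1 q2 where q: "q1 \<in> half_edges_at Q3 vj" "q2 \<in> half_edges_at Q3 vj" "q1 \<noteq> q2"
    and q_lab: "lam q1 = lam p1" "lam q2 = lam p1"
    by blast
  have "half_end Q3 (other_half q1) \<noteq> half_end Q3 (other_half q2)"
    by (rule no_parallel_edges_far_ends_neq[OF bipartite_Q3 no_parallel_edges_Q3 q])
  then have "\<exists>q \<in> {q1, q2}. half_end Q3 (other_half q) \<noteq> 7 - vi"
    by auto
  then obtain q where "q \<in> {q1, q2}" and not_antipode: "half_end Q3 (other_half q) \<noteq> 7 - vi"
    by blast
  then have q_in: "q \<in> half_edges_at Q3 vj" and q_lab': "lam q = lam p1"
    using q q_lab by auto
  have near: "adjacent Q3 vi (half_end Q3 (other_half q)) \<or>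
      (\<exists>m. adjacent Q3 vi m \<and> adjacent Q3 m (half_end Q3 (other_half q)))"
    by (rule Q3_far_end_near[OF vi apart q_in not_antipode])
  have "lam p1 = lam q" "lam p2 = lam q"
    using lab q_lab' by simp_all
  note distant = repeated_label_far_end_distant[OF swaps bipartite_Q3 no_parallel_edges_Q3 p q_in this
      \<open>vi \<noteq> vj\<close> apart]
  from near distant show False
    by blast
qed

theorem lemma4:
  fixes P :: "'a tile set"
    and lam :: "(nat \<times> nat) \<times> bool \<Rightarrow> 'a cend"
    and t :: "'a tile"
    and vi vj :: nat
  assumes "is_pot P"
    and "realizes_scenario3 P Q3"
    and "assembly_design Q3 lam"
    and "pot_of Q3 lam \<subseteq> P"
    and "t \<in> P"
    and "vi \<in> verts Q3" and "vj \<in> verts Q3" and "vi \<noteq> vj"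
    and "tile_at Q3 lam vi = t" and "tile_at Q3 lam vj = t"
  shows "\<exists>a b c. t = {#a, b, c#} \<and> bond_type a \<noteq> bond_type b \<and>
           bond_type a \<noteq> bond_type c \<and> bond_type b \<noteq> bond_type c"
proof -
  have swaps: "swaps_keep_simple_bipartite Q3 lam"
    using realizes_scenario3_swaps_keep_simple_bipartite[OF assms(2) is_graph_Q3 assms(3,4)
        bipartite_Q3 no_parallel_edges_Q3] .
  have "card (half_edges_at Q3 vi) = 3"
    using assms(6) by (simp add: verts_Q3 card_half_edges_at_Q3)
  then obtain h0 h1 h2 where hs: "half_edges_at Q3 vi = {h0, h1, h2}"
    and distinct: "h0 \<noteq> h1" "h1 \<noteq> h2" "h0 \<noteq> h2"
    unfolding card_3_iff by blast
  have t: "t = {#lam h0, lam h1, lam h2#}"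
    using assms(9) distinct by (simp add: tile_at_def hs)
  have tiles: "tile_at Q3 lam vi = tile_at Q3 lam vj"
    using assms(9,10) by simp
  have bond_types: "bond_type (lam a) \<noteq> bond_type (lam b)"
    if "a \<in> half_edges_at Q3 vi" "b \<in> half_edges_at Q3 vi" "a \<noteq> b" for a b
    using same_bond_type_imp_same_label[OF swaps assms(3) that]
      Q3_equal_tiles_no_repeated_label[OF swaps assms(3,6,7,8) tiles that] by blast
  have "bond_type (lam h0) \<noteq> bond_type (lam h1)" "bond_type (lam h0) \<noteq> bond_type (lam h2)"
    "bond_type (lam h1) \<noteq> bond_type (lam h2)"
    using bond_types distinct by (simp_all add: hs)
  then show ?thesis
    unfolding t by (intro exI[of _ "lam h0"] exI[of _ "lam h1"] exI[of _ "lam h2"]) simp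
qed

end
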